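(* Let $G$ be a finite simple graph of order $n$ with minimum degree $\delta=\delta(G)\geq 3$. Then $$\gamma_{st}(G)\leq n-2\left\lfloor\frac{2\rho_{o}(G)+\delta-3}{2}\right\rfloor,$$ and this bound is sharp (there exist graphs with $\delta\ge 3$ attaining equality).
   Context: For a vertex $v$, $N(v)$ denotes the open neighborhood of $v$ (the set of vertices adjacent to $v$). A signed total dominating function (STDF) of $G$ is a function $f:V(G)\to\{-1,1\}$ such that $f(N(v))=\sum_{u\in N(v)}f(u)\geq 1$ for every vertex $v$. The signed total domination number $\gamma_{st}(G)$ is the minimum of $f(V(G))=\sum_{v\in V(G)}f(v)$ over all STDFs $f$ of $G$. A set $B\subseteq V(G)$ is an open packing if $N(u)\cap N(v)=\emptyset$ for all distinct $u,v\in B$; the open packing number $\rho_o(G)$ is the maximum cardinality of an open packing in $G$. *)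

theory Defs
  imports Complex_Main
begin

definition simple_graph :: "'a set \<Rightarrow> ('a \<Rightarrow> 'a \<Rightarrow> bool) \<Rightarrow> bool" where
  "simple_graph V E \<longleftrightarrow> finite V \<and> (\<forall>u v. E u v \<longrightarrow> u \<in> V \<and> v \<in> V)
     \<and> (\<forall>u v. E u v \<longrightarrow> E v u) \<and> (\<forall>v. \<not> E v v)"

definition nbhd :: "'a set \<Rightarrow> ('a \<Rightarrow> 'a \<Rightarrow> bool) \<Rightarrow> 'a \<Rightarrow> 'a set" where
  "nbhd V E v = {u \<in> V. E v u}"

definition min_degree :: "'a set \<Rightarrow> ('a \<Rightarrow> 'a \<Rightarrow> bool) \<Rightarrow> nat" where
  "min_degree V E = Min ((\<lambda>v. card (nbhd V E v)) ` V)"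

definition is_stdf :: "'a set \<Rightarrow> ('a \<Rightarrow> 'a \<Rightarrow> bool) \<Rightarrow> ('a \<Rightarrow> int) \<Rightarrow> bool" where
  "is_stdf V E f \<longleftrightarrow> (\<forall>v\<in>V. f v \<in> {-1, 1}) \<and> (\<forall>v\<in>V. (\<Sum>u\<in>nbhd V E v. f u) \<ge> 1)"

definition gamma_st :: "'a set \<Rightarrow> ('a \<Rightarrow> 'a \<Rightarrow> bool) \<Rightarrow> int" where
  "gamma_st V E = Min {(\<Sum>v\<in>V. f v) | f. is_stdf V E f}"

definition open_packing :: "'a set \<Rightarrow> ('a \<Rightarrow> 'a \<Rightarrow> bool) \<Rightarrow> 'a set \<Rightarrow> bool" where
  "open_packing V E B \<longleftrightarrow> B \<subseteq> V \<and>
     (\<forall>u\<in>B. \<forall>v\<in>B. u \<noteq> v \<longrightarrow> nbhd V E u \<inter> nbhd V E v = {})"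

definition rho_o :: "'a set \<Rightarrow> ('a \<Rightarrow> 'a \<Rightarrow> bool) \<Rightarrow> nat" where
  "rho_o V E = Max {card B | B. open_packing V E B}"

end

theory Submission
  imports Defs
begin

text \<open>Take a maximum open packing \<open>B\<close> and any \<open>k = \<lfloor>(\<delta> - 3)/2\<rfloor>\<close> further vertices \<open>C\<close>,
  and assign \<open>-1\<close> exactly to \<open>B \<union> C\<close>. Every open neighbourhood meets \<open>B\<close> at most once,
  so it contains at most \<open>k + 1\<close> negative vertices out of at least \<open>\<delta> \<ge> 2k + 3\<close>; hence
  the function is signed total dominating, of weight \<open>n - 2(\<rho>\<^sub>o + k)\<close>. Equality holds
  for \<open>K\<^sub>4\<close>.\<close>

lemma sum_minus_one_on_subset:
  assumes "finite A"
  shows "(\<Sum>x\<in>A. if x \<in> S then -1 else 1::int) = int (card A) - 2 * int (card (A \<inter> S))"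
proof -
  have "(\<Sum>x\<in>A. if x \<in> S then -1 else 1::int) = - int (card (A \<inter> S)) + int (card (A - S))"
    using assms by (simp add: sum.If_cases Diff_eq)
  moreover have "card (A - S) = card A - card (A \<inter> S)" "card (A \<inter> S) \<le> card A"
    using assms by (simp_all add: card_Diff_subset_Int card_mono)
  ultimately show ?thesis by (simp add: of_nat_diff)
qed

lemma simple_graph_finite_nbhd: "simple_graph V E \<Longrightarrow> finite (nbhd V E v)"
  unfolding simple_graph_def nbhd_def by auto

lemma min_degree_le_card_nbhd:
  "simple_graph V E \<Longrightarrow> v \<in> V \<Longrightarrow> min_degree V E \<le> card (nbhd V E v)"
  unfolding min_degree_def simple_graph_def by (intro Min_le) auto

lemma finite_stdf_weights:
  assumes "finite V"
  shows "finite {(\<Sum>v\<in>V. f v) | f. is_stdf V E f}"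
proof (rule finite_subset)
  show "{(\<Sum>v\<in>V. f v) | f. is_stdf V E f} \<subseteq> {- int (card V) .. int (card V)}"
  proof
    fix x assume "x \<in> {(\<Sum>v\<in>V. f v) | f. is_stdf V E f}"
    then obtain f where x: "x = (\<Sum>v\<in>V. f v)" and f: "is_stdf V E f" by blast
    have "\<bar>x\<bar> \<le> (\<Sum>v\<in>V. \<bar>f v\<bar>)" using x sum_abs by blast
    also have "\<dots> \<le> (\<Sum>v\<in>V. 1)" using f unfolding is_stdf_def by (intro sum_mono) auto
    finally show "x \<in> {- int (card V) .. int (card V)}" by auto
  qed
qed simp

lemma gamma_st_le:
  "finite V \<Longrightarrow> is_stdf V E f \<Longrightarrow> gamma_st V E \<le> (\<Sum>v\<in>V. f v)"
  unfolding gamma_st_def using finite_stdf_weights by (intro Min_le) blast+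

lemma gamma_st_eqI:
  assumes "finite V" "is_stdf V E f" "(\<Sum>v\<in>V. f v) = w"
    and "\<And>g. is_stdf V E g \<Longrightarrow> w \<le> (\<Sum>v\<in>V. g v)"
  shows "gamma_st V E = w"
  unfolding gamma_st_def using assms finite_stdf_weights by (intro Min_eqI) blast+

lemma finite_open_packing_cards:
  assumes "finite V"
  shows "finite {card B | B. open_packing V E B}"
proof (rule finite_subset)
  show "{card B | B. open_packing V E B} \<subseteq> {0..card V}"
    using assms by (auto simp: open_packing_def card_mono)
qed simp

lemma rho_o_attained:
  assumes "finite V"
  obtains B where "open_packing V E B" "card B = rho_o V E"
proof -
  have "open_packing V E {}" by (simp add: open_packing_def)
  then have "rho_o V E \<in> {card B | B. open_packing V E B}"
    unfolding rho_o_def using finite_open_packing_cards[OF assms] by (intro Max_in) auto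
  then show ?thesis by (auto intro: that)
qed

lemma rho_o_eqI:
  assumes "finite V" "open_packing V E B" "card B = r"
    and "\<And>B'. open_packing V E B' \<Longrightarrow> card B' \<le> r"
  shows "rho_o V E = r"
  unfolding rho_o_def using assms finite_open_packing_cards by (intro Max_eqI) blast+

lemma card_nbhd_Int_open_packing_le_1:
  assumes G: "simple_graph V E" and B: "open_packing V E B" and v: "v \<in> V"
  shows "card (nbhd V E v \<inter> B) \<le> 1"
proof -
  have "u = w" if u: "u \<in> nbhd V E v \<inter> B" and w: "w \<in> nbhd V E v \<inter> B" for u w
  proof (rule ccontr)
    assume "u \<noteq> w"
    then have "nbhd V E u \<inter> nbhd V E w = {}" using u w B unfolding open_packing_def by auto
    moreover have "v \<in> nbhd V E u \<inter> nbhd V E w"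
      using u w G v unfolding nbhd_def simple_graph_def by auto
    ultimately show False by auto
  qed
  moreover have "finite (nbhd V E v \<inter> B)" using simple_graph_finite_nbhd[OF G] by blast
  ultimately show ?thesis by (metis One_nat_def card_le_Suc0_iff_eq)
qed

lemma is_stdf_open_packing_extension:
  assumes G: "simple_graph V E" and B: "open_packing V E B" and "finite C"
    and deg: "\<And>v. v \<in> V \<Longrightarrow> 2 * card C + 3 \<le> card (nbhd V E v)"
  shows "is_stdf V E (\<lambda>x. if x \<in> B \<union> C then -1 else 1)"
  unfolding is_stdf_def
proof (intro conjI ballI)
  fix v assume v: "v \<in> V"
  show "(if v \<in> B \<union> C then -1 else 1) \<in> {-1, 1::int}" by simp
  have "card (nbhd V E v \<inter> (B \<union> C)) \<le> card (nbhd V E v \<inter> B) + card (nbhd V E v \<inter> C)"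
    by (metis Int_Un_distrib card_Un_le)
  also have "\<dots> \<le> 1 + card C"
    using card_nbhd_Int_open_packing_le_1[OF G B v] card_mono[OF \<open>finite C\<close>, of "nbhd V E v \<inter> C"]
    by auto
  finally show "1 \<le> (\<Sum>u\<in>nbhd V E v. if u \<in> B \<union> C then -1 else 1::int)"
    using sum_minus_one_on_subset[OF simple_graph_finite_nbhd[OF G, of v], of "B \<union> C"] deg[OF v]
    by linarith
qed

lemma gamma_st_le_open_packing_bound:
  assumes G: "simple_graph V E" and "V \<noteq> {}" and d3: "min_degree V E \<ge> 3"
  shows "gamma_st V E \<le> int (card V) - 2 * int (rho_o V E + (min_degree V E - 3) div 2)"
proof -
  define k where "k = (min_degree V E - 3) div 2"
  have fin: "finite V" using G simple_graph_def by auto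
  obtain B where B: "open_packing V E B" "card B = rho_o V E" using rho_o_attained[OF fin] .
  have BV: "B \<subseteq> V" using B(1) unfolding open_packing_def by auto
  obtain v0 where v0: "v0 \<in> V" using \<open>V \<noteq> {}\<close> by auto
  have "card (nbhd V E v0) = card (nbhd V E v0 - B) + card (nbhd V E v0 \<inter> B)"
    using simple_graph_finite_nbhd[OF G] by (metis Int_commute card_Int_Diff add.commute)
  moreover have "card (nbhd V E v0 - B) \<le> card (V - B)"
    using fin by (intro card_mono) (auto simp: nbhd_def)
  ultimately have "k \<le> card (V - B)"
    using card_nbhd_Int_open_packing_le_1[OF G B(1) v0] min_degree_le_card_nbhd[OF G v0] d3
    unfolding k_def by linarith
  then obtain C where C: "C \<subseteq> V - B" "card C = k" "finite C" by (rule obtain_subset_with_card_n)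
  have "is_stdf V E (\<lambda>x. if x \<in> B \<union> C then -1 else 1)"
    using min_degree_le_card_nbhd[OF G] d3 C
    by (intro is_stdf_open_packing_extension[OF G B(1) \<open>finite C\<close>]) (fastforce simp: k_def)
  then have "gamma_st V E \<le> int (card V) - 2 * int (card (V \<inter> (B \<union> C)))"
    using gamma_st_le[OF fin] sum_minus_one_on_subset[OF fin] by metis
  also have "V \<inter> (B \<union> C) = B \<union> C" using BV C by auto
  also have "card (B \<union> C) = rho_o V E + k"
    using B C finite_subset[OF BV fin] by (subst card_Un_disjoint) auto
  finally show ?thesis unfolding k_def .
qed

lemma floor_packing_bound_eq:
  assumes "\<delta> \<ge> 3"
  shows "\<lfloor>(2 * real \<rho> + real \<delta> - 3) / 2\<rfloor> = int (\<rho> + (\<delta> - 3) div 2)"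
proof -
  have "(2 * real \<rho> + real \<delta> - 3) / 2 = real (2 * \<rho> + (\<delta> - 3)) / real (2::nat)"
    using assms by (simp add: of_nat_diff)
  also have "\<lfloor>\<dots>\<rfloor> = int ((2 * \<rho> + (\<delta> - 3)) div 2)" by (rule floor_divide_of_nat_eq)
  finally show ?thesis by simp
qed

definition K4_edge :: "nat \<Rightarrow> nat \<Rightarrow> bool" where
  "K4_edge u v \<longleftrightarrow> u \<noteq> v \<and> u < 4 \<and> v < 4"

lemma nbhd_K4: "v \<in> {..<4} \<Longrightarrow> nbhd {..<4} K4_edge v = {..<4} - {v}"
  unfolding nbhd_def K4_edge_def by auto

lemma simple_graph_K4: "simple_graph {..<4} K4_edge"
  unfolding simple_graph_def K4_edge_def by auto

lemma min_degree_K4: "min_degree {..<4} K4_edge = 3"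
proof -
  have "(\<lambda>v. card (nbhd {..<4} K4_edge v)) ` {..<4} = (\<lambda>_. 3) ` {..<4::nat}"
    by (rule image_cong) (simp_all add: nbhd_K4 card_Diff_singleton)
  also have "\<dots> = {3}" by (rule image_constant[of 0]) simp
  finally show ?thesis unfolding min_degree_def by simp
qed

lemma rho_o_K4: "rho_o {..<4} K4_edge = 1"
proof (rule rho_o_eqI)
  show "open_packing {..<4} K4_edge {0}" by (simp add: open_packing_def)
next
  fix B assume B: "open_packing {..<4} K4_edge B"
  have "u = w" if "u \<in> B" "w \<in> B" for u w
  proof (rule ccontr)
    assume "u \<noteq> w"
    moreover have "u < 4" "w < 4" using that B by (auto simp: open_packing_def)
    ultimately have "card ({..<4::nat} - {u, w}) = 2" by (simp add: card_Diff_subset)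
    then obtain x where "x \<in> {..<4} - {u, w}" by (metis card.empty ex_in_conv zero_neq_numeral)
    then have "x \<in> nbhd {..<4} K4_edge u \<inter> nbhd {..<4} K4_edge w"
      using \<open>u < 4\<close> \<open>w < 4\<close> by (simp add: nbhd_K4)
    then show False using B \<open>u \<noteq> w\<close> that by (auto simp: open_packing_def)
  qed
  moreover have "finite B" using B by (auto simp: open_packing_def intro: finite_subset)
  ultimately show "card B \<le> 1" by (metis One_nat_def card_le_Suc0_iff_eq)
qed auto

lemma gamma_st_K4: "gamma_st {..<4} K4_edge = 2"
proof (rule gamma_st_eqI)
  let ?f = "\<lambda>v::nat. if v = 0 then -1 else (1::int)"
  show "is_stdf {..<4} K4_edge ?f"
    unfolding is_stdf_def
  proof (intro conjI ballI)
    fix v :: nat assume v: "v \<in> {..<4}"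
    then have "v = 0 \<or> v = 1 \<or> v = 2 \<or> v = 3" by auto
    then show "1 \<le> (\<Sum>u\<in>nbhd {..<4} K4_edge v. ?f u)"
      using nbhd_K4[OF v] by (elim disjE) (simp_all add: lessThan_nat_numeral insert_Diff_if)
  qed simp
  show "(\<Sum>v<4. ?f v) = 2" by (simp add: lessThan_nat_numeral)
next
  fix g assume g: "is_stdf {..<4} K4_edge g"
  have "1 \<le> (\<Sum>v<4. g v) - g u" if "u < 4" for u
    using g that by (auto simp: is_stdf_def nbhd_K4 sum_diff1)
  from this[of 0] this[of 1] this[of 2] this[of 3]
  show "2 \<le> (\<Sum>v<4. g v)" by (simp add: lessThan_nat_numeral)
qed simp

theorem theorem2p1:
  shows "(\<forall>(V :: 'a set) E. simple_graph V E \<and> V \<noteq> {} \<and> min_degree V E \<ge> 3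
            \<longrightarrow> gamma_st V E \<le> int (card V)
                 - 2 * \<lfloor>(2 * real (rho_o V E) + real (min_degree V E) - 3) / 2\<rfloor>)
       \<and> (\<exists>(V :: nat set) E. simple_graph V E \<and> V \<noteq> {} \<and> min_degree V E \<ge> 3
            \<and> gamma_st V E = int (card V)
                 - 2 * \<lfloor>(2 * real (rho_o V E) + real (min_degree V E) - 3) / 2\<rfloor>)"
proof (intro conjI allI impI)
  fix V :: "'a set" and E
  assume "simple_graph V E \<and> V \<noteq> {} \<and> min_degree V E \<ge> 3"
  then show "gamma_st V E \<le> int (card V)
               - 2 * \<lfloor>(2 * real (rho_o V E) + real (min_degree V E) - 3) / 2\<rfloor>"
    using gamma_st_le_open_packing_bound floor_packing_bound_eq by metis
next
  show "\<exists>(V :: nat set) E. simple_graph V E \<and> V \<noteq> {} \<and> min_degree V E \<ge> 3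
          \<and> gamma_st V E = int (card V)
               - 2 * \<lfloor>(2 * real (rho_o V E) + real (min_degree V E) - 3) / 2\<rfloor>"
    using simple_graph_K4 min_degree_K4 rho_o_K4 gamma_st_K4
    by (intro exI[of _ "{..<4}"] exI[of _ K4_edge]) (simp add: lessThan_empty_iff)
qed

end
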